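(* Let $G$ be a word-hyperbolic group with a finite generating set and let $d$ be the associated word-length metric (Cayley graph metric). Then the action of $G$ on the metric boundary $\partial_d G$ is amenable.
   Context: A group with finite presentation $\langle S\mid R\rangle$ is word-hyperbolic if there is $K\ge0$ such that every reduced word $w$ with $w=e$ in $G$ is a product of at most $K\,l(w)$ conjugates $u^{-1}ru$ with $r\in R\cup R^{-1}$ (equivalently its Cayley graph with the graph metric is a hyperbolic metric space). Metric boundary: fix base point $0$, let $\varphi_y(x)=d(x,0)-d(x,y)$; the metric compactification is the maximal ideal space of the commutative unital C*-algebra generated by the functions vanishing at infinity, the constants and the $\varphi_y$; the metric boundary is the compactification minus the space itself. $G$ acts on it by $\alpha_g(\omega)=\lim_k g x_k$ for $x_k\to\omega$. An action of a topological group $G$ on a topological space $Y$ is amenable if there is a net of continuous maps $m_\lambda:Y\to M_1^+(G)$ ($M_1^+(G)$ the Borel probability measures on $G$) with $\|g\cdot m_\lambda(y)-m_\lambda(g\cdot y)\|\to0$ uniformly on compact subsets of $G\times Y$. *)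

theory Defs
  imports "HOL-Analysis.Analysis"
begin

text \<open>The group is a type of class group_add (written additively, not assumed
commutative); its neutral element 0 is the base point.\<close>

definition generates :: "'a::group_add set \<Rightarrow> bool" where
  "generates S \<longleftrightarrow> (\<forall>g. \<exists>ws. set ws \<subseteq> S \<union> uminus ` S \<and> sum_list ws = g)"

definition word_len :: "'a::group_add set \<Rightarrow> 'a \<Rightarrow> nat" where
  "word_len S g = (LEAST n. \<exists>ws. length ws = n \<and> set ws \<subseteq> S \<union> uminus ` S \<and> sum_list ws = g)"

text \<open>Word metric = graph metric of the Cayley graph (edges x -- x + s).\<close>
definition word_dist :: "'a::group_add set \<Rightarrow> 'a \<Rightarrow> 'a \<Rightarrow> real" where
  "word_dist S x y = real (word_len S (- x + y))"

definition gromov_prod :: "'a::group_add set \<Rightarrow> 'a \<Rightarrow> 'a \<Rightarrow> 'a \<Rightarrow> real" where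
  "gromov_prod S x y w = (word_dist S x w + word_dist S y w - word_dist S x y) / 2"

text \<open>Gromov hyperbolicity of the Cayley graph metric (four-point condition on the
vertex set, which is 1-dense in the Cayley graph).\<close>
definition word_hyperbolic :: "'a::group_add set \<Rightarrow> bool" where
  "word_hyperbolic S \<longleftrightarrow> (\<exists>\<delta>::real. \<forall>x y z w.
      gromov_prod S x z w \<ge> min (gromov_prod S x y w) (gromov_prod S y z w) - \<delta>)"

definition busemann :: "'a::group_add set \<Rightarrow> 'a \<Rightarrow> 'a \<Rightarrow> complex" where
  "busemann S y = (\<lambda>x. complex_of_real (word_dist S x 0 - word_dist S x y))"

definition vanish_at_infinity :: "('a \<Rightarrow> complex) set" where
  "vanish_at_infinity = {f. \<forall>\<epsilon>>0. finite {x. \<epsilon> \<le> cmod (f x)}}"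

definition gen_set :: "'a::group_add set \<Rightarrow> ('a \<Rightarrow> complex) set" where
  "gen_set S = vanish_at_infinity \<union> range (\<lambda>c. (\<lambda>x. c)) \<union> range (busemann S)"

inductive_set star_alg :: "('a \<Rightarrow> complex) set \<Rightarrow> ('a \<Rightarrow> complex) set" for B where
  gen: "f \<in> B \<Longrightarrow> f \<in> star_alg B"
| add: "f \<in> star_alg B \<Longrightarrow> g \<in> star_alg B \<Longrightarrow> (\<lambda>x. f x + g x) \<in> star_alg B"
| mult: "f \<in> star_alg B \<Longrightarrow> g \<in> star_alg B \<Longrightarrow> (\<lambda>x. f x * g x) \<in> star_alg B"
| scal: "f \<in> star_alg B \<Longrightarrow> (\<lambda>x. c * f x) \<in> star_alg B"
| conj: "f \<in> star_alg B \<Longrightarrow> (\<lambda>x. cnj (f x)) \<in> star_alg B"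

definition cstar_alg :: "'a::group_add set \<Rightarrow> ('a \<Rightarrow> complex) set" where
  "cstar_alg S = {f. \<forall>\<epsilon>>0. \<exists>h\<in>star_alg (gen_set S). \<forall>x. cmod (f x - h x) \<le> \<epsilon>}"

text \<open>Maximal ideal space = characters (nonzero multiplicative linear functionals),
with the weak-* topology (subspace of the product topology on the function type).
Characters are made extensional by setting them 0 outside the algebra.\<close>
definition metric_compactification :: "'a::group_add set \<Rightarrow> (('a \<Rightarrow> complex) \<Rightarrow> complex) set" where
  "metric_compactification S = {ch.
      (\<forall>f\<in>cstar_alg S. \<forall>g\<in>cstar_alg S.
          ch (\<lambda>x. f x + g x) = ch f + ch g \<and> ch (\<lambda>x. f x * g x) = ch f * ch g) \<and>
      (\<forall>f\<in>cstar_alg S. \<forall>c. ch (\<lambda>x. c * f x) = c * ch f) \<and>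
      ch (\<lambda>x. 1) = 1 \<and>
      (\<forall>f. f \<notin> cstar_alg S \<longrightarrow> ch f = 0)}"

definition eval_char :: "'a::group_add set \<Rightarrow> 'a \<Rightarrow> (('a \<Rightarrow> complex) \<Rightarrow> complex)" where
  "eval_char S x = (\<lambda>f. if f \<in> cstar_alg S then f x else 0)"

definition metric_boundary :: "'a::group_add set \<Rightarrow> (('a \<Rightarrow> complex) \<Rightarrow> complex) set" where
  "metric_boundary S = metric_compactification S - range (eval_char S)"

text \<open>alpha_g(omega) = lim g x_k for x_k -> omega.\<close>
definition bdry_action :: "'a::group_add set \<Rightarrow> 'a \<Rightarrow> (('a \<Rightarrow> complex) \<Rightarrow> complex)
    \<Rightarrow> (('a \<Rightarrow> complex) \<Rightarrow> complex)" where
  "bdry_action S g \<omega> = (THE L.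
      ((\<lambda>ch. eval_char S (g + inv (eval_char S) ch)) \<longlongrightarrow> L)
        (at \<omega> within range (eval_char S)))"

text \<open>Probability measures on the discrete group G are functions mu with mu >= 0 and
total mass 1; continuity into M_1^+(G) is weak-* continuity, i.e. continuity of each
coordinate; the norm is the total variation (l1) norm; (g.mu)(x) = mu(g^-1 x).
Existence of a net with uniform convergence on compact subsets of G x Y
(G discrete, so compact sets lie in F x C with F finite and C compact) is
stated in the equivalent form: for every such F, C and epsilon there is a map.\<close>
definition amenable_action :: "('g::group_add \<Rightarrow> 'y::topological_space \<Rightarrow> 'y) \<Rightarrow> 'y set \<Rightarrow> bool" where
  "amenable_action act Y \<longleftrightarrow>
    (\<forall>F C \<epsilon>. finite F \<and> compact C \<and> C \<subseteq> Y \<and> \<epsilon> > (0::real) \<longrightarrow>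
      (\<exists>m :: 'y \<Rightarrow> 'g \<Rightarrow> real.
         (\<forall>y\<in>Y. (\<forall>x. m y x \<ge> 0) \<and> (m y has_sum 1) UNIV) \<and>
         (\<forall>x. continuous_on Y (\<lambda>y. m y x)) \<and>
         (\<forall>g\<in>F. \<forall>y\<in>C. infsum (\<lambda>x. \<bar>m y (- g + x) - m (act g y) x\<bar>) UNIV < \<epsilon>)))"

end

(* A boundary point y is a character of the algebra; on the Busemann functions it
   takes integer values h z = y (busemann z), and h is a horofunction: on every finite set it
   agrees with z |-> d(w,0) - d(w,z) for some w outside any prescribed finite set.  The group
   acts on these by (g.h) z = h (g^-1 z) - h (g^-1).

   For a horofunction h, a base point b, a radius R and a level t, the shadow W(b,R,t) consists
   of the points of the horosphere h = t reached from the R-ball around b along a path on which h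
   grows at unit speed.  For t >= h b + 2R the four-point condition bounds the diameter of
   W(b,R,t) by 4 delta, hence its cardinality by a constant N.  The measure attached to y
   averages the uniform probabilities on W(0,R,t) over L radii R and L consecutive levels t.
   Moving the base point by r shifts the window of levels by at most r, which costs 2r/L, and
   changes W(b,R,t) only for radii R at which the increasing sequence R |-> card W(b,R,t),
   bounded by N, jumps within 2r steps; there are at most r + 2rN of them, which costs
   O(rN/L).  Finally the measure depends only on finitely many integer values of h, so it is
   locally constant in y. *)

theory Submission
  imports Defs
begin

section \<open>Word length\<close>

lemma sum_list_rev_map_uminus:
  fixes ws :: "'a::group_add list"
  shows "sum_list (rev (map uminus ws)) = - sum_list ws"
  by (induction ws) (auto simp: minus_add)

lemma left_transl_image_iff:
  fixes g :: "'a::group_add"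
  shows "x \<in> (+) g ` A \<longleftrightarrow> - g + x \<in> A"
proof
  assume "x \<in> (+) g ` A"
  then show "- g + x \<in> A" by (auto simp: minus_add_cancel)
next
  assume "- g + x \<in> A"
  then show "x \<in> (+) g ` A" by (rule rev_image_eqI) (simp add: add.assoc[symmetric])
qed

locale generating_set =
  fixes S :: "'a::group_add set"
  assumes generates: "generates S"
begin

abbreviation letters :: "'a set" where
  "letters \<equiv> S \<union> uminus ` S"

lemma word_len_attained:
  obtains ws where "length ws = word_len S g" "set ws \<subseteq> letters" "sum_list ws = g"
proof -
  obtain ws where "set ws \<subseteq> letters" "sum_list ws = g"
    using generates unfolding generates_def by blast
  then have "\<exists>n ws. length ws = n \<and> set ws \<subseteq> letters \<and> sum_list ws = g" by blast
  then have "\<exists>ws. length ws = word_len S g \<and> set ws \<subseteq> letters \<and> sum_list ws = g"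
    unfolding word_len_def by (rule LeastI_ex)
  then show thesis using that by blast
qed

lemma word_len_le_length: "set ws \<subseteq> letters \<Longrightarrow> word_len S (sum_list ws) \<le> length ws"
  unfolding word_len_def by (rule Least_le) blast

lemma word_len_zero [simp]: "word_len S 0 = 0"
  using word_len_le_length[of "[]"] by simp

lemma word_len_add_le: "word_len S (a + b) \<le> word_len S a + word_len S b"
proof -
  obtain as bs where "length as = word_len S a" "set as \<subseteq> letters" "sum_list as = a"
    and "length bs = word_len S b" "set bs \<subseteq> letters" "sum_list bs = b"
    by (metis word_len_attained)
  then show ?thesis using word_len_le_length[of "as @ bs"] by simp
qed

lemma word_len_uminus [simp]: "word_len S (- a) = word_len S a"
proof -
  have le: "word_len S (- a) \<le> word_len S a" for a
  proof -
    obtain ws where "length ws = word_len S a" "set ws \<subseteq> letters" "sum_list ws = a"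
      by (rule word_len_attained)
    moreover have "set (rev (map uminus ws)) \<subseteq> letters" if "set ws \<subseteq> letters"
      using that by force
    ultimately show ?thesis
      using word_len_le_length[of "rev (map uminus ws)"] by (simp add: sum_list_rev_map_uminus)
  qed
  show ?thesis using le[of a] le[of "- a"] by simp
qed

lemma word_len_split:
  assumes "k \<le> word_len S g"
  obtains p where "word_len S p = k" "word_len S (- p + g) = word_len S g - k"
proof -
  obtain ws where ws: "length ws = word_len S g" "set ws \<subseteq> letters" "sum_list ws = g"
    by (rule word_len_attained)
  define p where "p = sum_list (take k ws)"
  have rest: "- p + g = sum_list (drop k ws)"
    using ws(3) unfolding p_def by (metis append_take_drop_id sum_list_append add_minus_cancel)
  have "word_len S p \<le> length (take k ws)"
    unfolding p_def using ws(2) by (meson order_trans set_take_subset word_len_le_length)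
  then have "word_len S p \<le> k" by simp
  moreover have "word_len S (- p + g) \<le> word_len S g - k"
    unfolding rest using word_len_le_length[of "drop k ws"] ws(1,2)
    by (metis length_drop order_trans set_drop_subset)
  moreover have "word_len S g \<le> word_len S p + word_len S (- p + g)"
    using word_len_add_le[of p "- p + g"] by (simp add: add.assoc[symmetric])
  ultimately have "word_len S p = k" "word_len S (- p + g) = word_len S g - k"
    using assms by linarith+
  then show thesis by (rule that)
qed

lemma word_len_triangle: "word_len S (- x + z) \<le> word_len S (- x + y) + word_len S (- y + z)"
  using word_len_add_le[of "- x + y" "- y + z"] by (simp add: add.assoc)

lemma word_len_commute: "word_len S (- x + y) = word_len S (- y + x)"
  using word_len_uminus[of "- x + y"] by (simp add: minus_add)

lemma word_len_left_transl: "word_len S (- (g + x) + (g + y)) = word_len S (- x + y)"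
  by (simp add: minus_add add.assoc[symmetric])

lemma finite_word_len_le: "finite S \<Longrightarrow> finite {g. word_len S g \<le> D}"
proof -
  assume "finite S"
  then have "finite (sum_list ` {ws. set ws \<subseteq> letters \<and> length ws \<le> D})"
    by (simp add: finite_lists_length_le)
  moreover have "{g. word_len S g \<le> D} \<subseteq> sum_list ` {ws. set ws \<subseteq> letters \<and> length ws \<le> D}"
  proof
    fix g assume "g \<in> {g. word_len S g \<le> D}"
    moreover obtain ws where "length ws = word_len S g" "set ws \<subseteq> letters" "sum_list ws = g"
      by (rule word_len_attained)
    ultimately show "g \<in> sum_list ` {ws. set ws \<subseteq> letters \<and> length ws \<le> D}" by force
  qed
  ultimately show ?thesis by (rule finite_subset[rotated])
qed

lemma finite_word_ball: "finite S \<Longrightarrow> finite {x. word_len S (- b + x) \<le> D}"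
proof -
  assume "finite S"
  moreover have "{x. word_len S (- b + x) \<le> D} = (+) b ` {g. word_len S g \<le> D}"
    by (force simp: add.assoc[symmetric] minus_add_cancel)
  ultimately show ?thesis by (simp add: finite_word_len_le)
qed

end

section \<open>Counting and averaging\<close>

lemma sum_shift_diff:
  fixes f :: "nat \<Rightarrow> 'a::ab_group_add"
  shows "(\<Sum>i<m. f (i + k) - f i) = (\<Sum>i<k. f (m + i) - f i)"
proof (induction m)
  case (Suc m)
  have "(\<Sum>i<Suc k. f (m + i)) = f m + (\<Sum>i<k. f (Suc m + i))"
    by (subst sum.lessThan_Suc_shift) simp
  then have "(\<Sum>i<k. f (Suc m + i)) = (\<Sum>i<k. f (m + i)) + f (m + k) - f m"
    by (simp add: algebra_simps)
  with Suc show ?case by (simp add: sum_subtractf)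
qed simp

lemma card_strict_increases_le:
  fixes c :: "nat \<Rightarrow> nat"
  assumes mono: "\<And>i j. i \<le> j \<Longrightarrow> j \<le> m + k \<Longrightarrow> c i \<le> c j"
    and bounded: "\<And>i. i \<le> m + k \<Longrightarrow> c i \<le> N"
  shows "card {i. i < m \<and> c i < c (i + k)} \<le> k * N"
proof -
  define J where "J = {i. i < m \<and> c i < c (i + k)}"
  have "int (card J) = (\<Sum>i\<in>J. 1)" by simp
  also have "\<dots> \<le> (\<Sum>i\<in>J. int (c (i + k)) - int (c i))"
    by (rule sum_mono) (auto simp: J_def)
  also have "\<dots> \<le> (\<Sum>i<m. int (c (i + k)) - int (c i))"
    by (rule sum_mono2) (auto simp: J_def mono)
  also have "\<dots> = (\<Sum>i<k. int (c (m + i)) - int (c i))"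
    by (rule sum_shift_diff)
  also have "\<dots> \<le> (\<Sum>i<k. int N)"
  proof (rule sum_mono)
    fix i assume "i \<in> {..<k}"
    then show "int (c (m + i)) - int (c i) \<le> int N" using bounded[of "m + i"] by simp
  qed
  finally show ?thesis unfolding J_def by (simp flip: of_nat_mult)
qed

lemma sum_abs_window_shift_le:
  fixes Q :: "int \<Rightarrow> 'b \<Rightarrow> real"
  assumes "finite X" and Q: "\<And>t. (\<Sum>x\<in>X. \<bar>Q t x\<bar>) \<le> 1"
  shows "(\<Sum>x\<in>X. \<bar>(\<Sum>j<n. Q (a + int j) x) - (\<Sum>j<n. Q (a + s + int j) x)\<bar>) \<le> 2 * \<bar>s\<bar>"
proof -
  have shift: "(\<Sum>x\<in>X. \<bar>(\<Sum>j<n. Q (a + int j) x) - (\<Sum>j<n. Q (a + int k + int j) x)\<bar>) \<le> 2 * real k"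
    for a k
  proof -
    have pointwise: "\<bar>(\<Sum>j<n. Q (a + int j) x) - (\<Sum>j<n. Q (a + int k + int j) x)\<bar>
        \<le> (\<Sum>j<k. \<bar>Q (a + int n + int j) x\<bar> + \<bar>Q (a + int j) x\<bar>)" for x
    proof -
      have "(\<Sum>j<n. Q (a + int k + int j) x) - (\<Sum>j<n. Q (a + int j) x)
          = (\<Sum>j<k. Q (a + int n + int j) x - Q (a + int j) x)"
        using sum_shift_diff[of "\<lambda>j. Q (a + int j) x" n k] by (simp add: sum_subtractf ac_simps)
      then have "\<bar>(\<Sum>j<n. Q (a + int j) x) - (\<Sum>j<n. Q (a + int k + int j) x)\<bar>
          = \<bar>\<Sum>j<k. Q (a + int n + int j) x - Q (a + int j) x\<bar>"
        by (simp add: abs_minus_commute)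
      also have "\<dots> \<le> (\<Sum>j<k. \<bar>Q (a + int n + int j) x - Q (a + int j) x\<bar>)"
        by (rule sum_abs)
      also have "\<dots> \<le> (\<Sum>j<k. \<bar>Q (a + int n + int j) x\<bar> + \<bar>Q (a + int j) x\<bar>)"
        by (intro sum_mono abs_triangle_ineq4)
      finally show ?thesis .
    qed
    have "(\<Sum>x\<in>X. \<bar>(\<Sum>j<n. Q (a + int j) x) - (\<Sum>j<n. Q (a + int k + int j) x)\<bar>)
        \<le> (\<Sum>x\<in>X. \<Sum>j<k. \<bar>Q (a + int n + int j) x\<bar> + \<bar>Q (a + int j) x\<bar>)"
      by (intro sum_mono pointwise)
    also have "\<dots> = (\<Sum>j<k. (\<Sum>x\<in>X. \<bar>Q (a + int n + int j) x\<bar>) + (\<Sum>x\<in>X. \<bar>Q (a + int j) x\<bar>))"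
      by (subst sum.swap) (simp add: sum.distrib)
    also have "\<dots> \<le> (\<Sum>j<k. 2)"
      by (rule sum_mono) (metis Q add_mono one_add_one)
    finally show ?thesis by simp
  qed
  show ?thesis
  proof (cases "s \<ge> 0")
    case True
    then show ?thesis using shift[of a "nat s"] by simp
  next
    case False
    then show ?thesis using shift[of "a + s" "nat (- s)"] by (simp add: abs_minus_commute)
  qed
qed

text \<open>The uniform probability on A if A is finite and nonempty; identically 0 if A is infinite,
since then card A = 0.\<close>
definition unif_weight :: "'a set \<Rightarrow> 'a \<Rightarrow> real" where
  "unif_weight A x = (if x \<in> A then 1 / real (card A) else 0)"

lemma unif_weight_nonneg: "unif_weight A x \<ge> 0"
  unfolding unif_weight_def by simp

lemma sum_unif_weight:
  assumes "finite X"
  shows "(\<Sum>x\<in>X. unif_weight A x) = real (card (X \<inter> A)) / real (card A)"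
proof -
  have "(\<Sum>x\<in>X. unif_weight A x) = (\<Sum>x\<in>X \<inter> A. 1 / real (card A))"
    unfolding unif_weight_def using sum.inter_restrict[OF assms, of "\<lambda>x. 1 / real (card A)" A]
    by simp
  then show ?thesis by simp
qed

lemma sum_unif_weight_le_1: "finite X \<Longrightarrow> (\<Sum>x\<in>X. unif_weight A x) \<le> 1"
proof (cases "finite A")
  case True
  then have "card (X \<inter> A) \<le> card A" by (simp add: card_mono)
  moreover assume "finite X"
  ultimately show ?thesis by (auto simp: sum_unif_weight divide_le_eq_1)
qed (simp add: sum_unif_weight)

lemma sum_unif_weight_eq_1:
  "finite X \<Longrightarrow> A \<subseteq> X \<Longrightarrow> A \<noteq> {} \<Longrightarrow> (\<Sum>x\<in>X. unif_weight A x) = 1"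
  by (simp add: sum_unif_weight Int_absorb1 finite_subset)

lemma sum_abs_diff_unif_weight_le_2:
  assumes "finite X"
  shows "(\<Sum>x\<in>X. \<bar>unif_weight A x - unif_weight B x\<bar>) \<le> 2"
proof -
  have "(\<Sum>x\<in>X. \<bar>unif_weight A x - unif_weight B x\<bar>) \<le> (\<Sum>x\<in>X. unif_weight A x + unif_weight B x)"
    by (intro sum_mono) (simp add: unif_weight_def abs_diff_le_iff)
  also have "\<dots> \<le> 2"
    using sum_unif_weight_le_1[OF assms, of A] sum_unif_weight_le_1[OF assms, of B]
    by (simp add: sum.distrib)
  finally show ?thesis .
qed

lemma unif_weight_left_transl:
  fixes g :: "'a::group_add"
  shows "unif_weight ((+) g ` A) x = unif_weight A (- g + x)"
proof -
  have "x \<in> (+) g ` A \<longleftrightarrow> - g + x \<in> A" by (rule left_transl_image_iff)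
  moreover have "card ((+) g ` A) = card A"
    by (rule card_image) (simp add: inj_on_def)
  ultimately show ?thesis unfolding unif_weight_def by simp
qed

section \<open>Horofunctions and their shadows\<close>

text \<open>Integer-valued limits of z \<mapsto> d(w,0) - d(w,z) as w \<rightarrow> \<infinity>: on every finite set such a
limit agrees with one of these functions, for w outside any given finite set.\<close>
definition horofunction :: "'a::group_add set \<Rightarrow> ('a \<Rightarrow> int) \<Rightarrow> bool" where
  "horofunction S h \<longleftrightarrow> (\<forall>Z K. finite Z \<longrightarrow> finite K \<longrightarrow>
      (\<exists>w. w \<notin> K \<and> (\<forall>z\<in>Z. h z = int (word_len S (- w)) - int (word_len S (- w + z)))))"

text \<open>The points of the horosphere h = t that can be reached from the R-ball around b
along a path on which h increases at unit speed.\<close>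
definition shadow :: "'a::group_add set \<Rightarrow> ('a \<Rightarrow> int) \<Rightarrow> 'a \<Rightarrow> nat \<Rightarrow> int \<Rightarrow> 'a set" where
  "shadow S h b R t =
    {v. h v = t \<and> (\<exists>u. word_len S (- b + u) \<le> R \<and> int (word_len S (- u + v)) + h u = t)}"

definition shadow_measure ::
    "'a::group_add set \<Rightarrow> nat \<Rightarrow> nat \<Rightarrow> nat \<Rightarrow> ('a \<Rightarrow> int) \<Rightarrow> 'a \<Rightarrow> 'a \<Rightarrow> real" where
  "shadow_measure S n L T h b x =
    (\<Sum>R\<in>{1..L}. \<Sum>j<n. unif_weight (shadow S h b R (h b + int T + int j)) x) / real (n * L)"

context generating_set
begin

lemma horofunction_agrees:
  assumes "horofunction S h" "finite Z"
  obtains w where "\<And>z. z \<in> Z \<Longrightarrow> h z = int (word_len S (- w)) - int (word_len S (- w + z))"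
  using assms(1)[unfolded horofunction_def, rule_format, of Z "{}"] assms(2) that by auto

lemma horofunction_lipschitz:
  assumes "horofunction S h"
  shows "h y - h x \<le> int (word_len S (- x + y))"
proof -
  obtain w where "\<And>z. z \<in> {x, y} \<Longrightarrow> h z = int (word_len S (- w)) - int (word_len S (- w + z))"
    by (rule horofunction_agrees[OF assms, of "{x, y}"]) auto
  moreover have "word_len S (- w + x) \<le> word_len S (- w + y) + word_len S (- x + y)"
    using word_len_triangle[of w x y] word_len_commute[of y x] by simp
  ultimately show ?thesis by simp
qed

lemma horofunction_ascent:
  assumes "horofunction S h" "finite S"
  obtains v where "word_len S (- b + v) = k" "h v = h b + int k"
proof -
  \<comment> \<open>walk k steps from b along a geodesic towards a far point w realising h near b\<close>
  define B where "B = {x. word_len S (- b + x) \<le> k}"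
  obtain w where w: "w \<notin> B"
    and hw: "\<And>x. x \<in> insert b B \<Longrightarrow> h x = int (word_len S (- w)) - int (word_len S (- w + x))"
    using assms(1)[unfolded horofunction_def, rule_format, of "insert b B" B]
      finite_word_ball[OF assms(2), of b k] unfolding B_def by auto
  then have k: "k \<le> word_len S (- b + w)" by (simp add: B_def)
  then obtain p where p: "word_len S p = k" "word_len S (- p + (- b + w)) = word_len S (- b + w) - k"
    by (rule word_len_split)
  define v where "v = b + p"
  have "- v + w = - p + (- b + w)" unfolding v_def by (simp only: minus_add add.assoc)
  then have "word_len S (- w + v) = word_len S (- b + w) - k"
    using p(2) word_len_commute[of w v] by simp
  moreover have "v \<in> B" unfolding B_def v_def using p(1) by (simp add: minus_add_cancel)
  ultimately have "h v = h b + int k"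
    using hw[of v] hw[of b] k word_len_commute[of w b] by simp
  moreover have "word_len S (- b + v) = k" unfolding v_def using p(1) by (simp add: minus_add_cancel)
  ultimately show thesis using that by blast
qed

lemma shadow_mono: "R \<le> R' \<Longrightarrow> shadow S h b R t \<subseteq> shadow S h b R' t"
  unfolding shadow_def using le_trans by fastforce

lemma shadow_move_base:
  assumes "word_len S (- b' + b) \<le> r"
  shows "shadow S h b R t \<subseteq> shadow S h b' (R + r) t"
proof
  fix v assume "v \<in> shadow S h b R t"
  then obtain u where u: "h v = t" "word_len S (- b + u) \<le> R" "int (word_len S (- u + v)) + h u = t"
    unfolding shadow_def by blast
  have "word_len S (- b' + u) \<le> R + r"
    using word_len_triangle[of b' u b] u(2) assms by simp
  then show "v \<in> shadow S h b' (R + r) t" unfolding shadow_def using u by blast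
qed

lemma shadow_nonempty:
  assumes "horofunction S h" "finite S" "h b \<le> t"
  shows "shadow S h b R t \<noteq> {}"
proof -
  obtain v where "word_len S (- b + v) = nat (t - h b)" "h v = h b + int (nat (t - h b))"
    by (rule horofunction_ascent[OF assms(1,2)])
  then have "v \<in> shadow S h b R t"
    unfolding shadow_def using assms(3) by (intro CollectI conjI exI[of _ b]) auto
  then show ?thesis by blast
qed

lemma shadow_subset_ball:
  assumes "horofunction S h" "v \<in> shadow S h b R t"
  shows "int (word_len S (- b + v)) \<le> 2 * int R + (t - h b)"
proof -
  obtain u where u: "h v = t" "word_len S (- b + u) \<le> R" "int (word_len S (- u + v)) + h u = t"
    using assms(2) unfolding shadow_def by blast
  moreover have "h b - h u \<le> int (word_len S (- b + u))"
    using horofunction_lipschitz[OF assms(1), of b u] word_len_commute[of u b] by simp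
  moreover have "word_len S (- b + v) \<le> word_len S (- b + u) + word_len S (- u + v)"
    by (rule word_len_triangle)
  ultimately show ?thesis by linarith
qed

lemma shadow_left_transl:
  "shadow S (\<lambda>z. h (- g + z) + c) b R t = (+) g ` shadow S h (- g + b) R (t - c)"
proof -
  have mem: "v \<in> shadow S (\<lambda>z. h (- g + z) + c) b R t \<longleftrightarrow> - g + v \<in> shadow S h (- g + b) R (t - c)"
    for v
  proof
    assume "v \<in> shadow S (\<lambda>z. h (- g + z) + c) b R t"
    then obtain u where "h (- g + v) + c = t" "word_len S (- b + u) \<le> R"
        "int (word_len S (- u + v)) + (h (- g + u) + c) = t"
      unfolding shadow_def by blast
    then show "- g + v \<in> shadow S h (- g + b) R (t - c)"
      unfolding shadow_def by (intro CollectI conjI exI[of _ "- g + u"]) (simp_all add: word_len_left_transl)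
  next
    assume "- g + v \<in> shadow S h (- g + b) R (t - c)"
    then obtain u where "h (- g + v) = t - c" "word_len S (- (- g + b) + u) \<le> R"
        "int (word_len S (- u + (- g + v))) + h u = t - c"
      unfolding shadow_def by blast
    moreover have "- (- g + b) + u = - b + (g + u)" "- u + (- g + v) = - (g + u) + v"
      by (simp_all only: minus_add minus_minus add.assoc)
    ultimately show "v \<in> shadow S (\<lambda>z. h (- g + z) + c) b R t"
      unfolding shadow_def by (intro CollectI conjI exI[of _ "g + u"]) (simp_all add: minus_add_cancel)
  qed
  show ?thesis by (rule set_eqI) (simp only: mem left_transl_image_iff)
qed

lemma shadow_measure_left_transl:
  "shadow_measure S n L T (\<lambda>z. h (- g + z) - h (- g)) 0 x = shadow_measure S n L T h (- g) (- g + x)"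
proof -
  have "shadow S (\<lambda>z. h (- g + z) - h (- g)) 0 R (int T + int j)
      = (+) g ` shadow S h (- g) R (h (- g) + int T + int j)" for R j
    using shadow_left_transl[of h g "- h (- g)" 0 R "int T + int j"] by (simp add: ac_simps)
  then show ?thesis unfolding shadow_measure_def by (simp add: unif_weight_left_transl)
qed

lemma shadow_cong_ball:
  assumes "horofunction S h" "horofunction S h'" "h b \<le> t"
    and agree: "\<And>z. int (word_len S (- b + z)) \<le> 2 * int R + (t - h b) \<Longrightarrow> h' z = h z"
  shows "shadow S h' b R t = shadow S h b R t"
proof -
  have "h' b = h b" using agree[of b] assms(3) by simp
  have subset: "shadow S h1 b R t \<subseteq> shadow S h2 b R t"
    if "horofunction S h1" "h1 b \<le> t"
      and "\<And>z. int (word_len S (- b + z)) \<le> 2 * int R + (t - h1 b) \<Longrightarrow> h2 z = h1 z" for h1 h2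
  proof
    fix v assume v: "v \<in> shadow S h1 b R t"
    then obtain u where u: "h1 v = t" "word_len S (- b + u) \<le> R" "int (word_len S (- u + v)) + h1 u = t"
      unfolding shadow_def by blast
    have "h2 u = h1 u" "h2 v = h1 v"
      using that(2,3) u(2) shadow_subset_ball[OF that(1) v] by simp_all
    then show "v \<in> shadow S h2 b R t" unfolding shadow_def using u by auto
  qed
  show ?thesis
  proof
    show "shadow S h' b R t \<subseteq> shadow S h b R t"
      by (rule subset[OF assms(2)]) (use agree \<open>h' b = h b\<close> assms(3) in auto)
    show "shadow S h b R t \<subseteq> shadow S h' b R t"
      by (rule subset[OF assms(1)]) (use agree assms(3) in auto)
  qed
qed

lemma shadow_measure_cong_ball:
  assumes "horofunction S h" "horofunction S h'"
    and "\<And>z. word_len S (- b + z) \<le> 2 * L + T + n \<Longrightarrow> h' z = h z"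
  shows "shadow_measure S n L T h' b = shadow_measure S n L T h b"
proof -
  have "h' b = h b" using assms(3)[of b] by simp
  moreover have "shadow S h' b R (h b + int T + int j) = shadow S h b R (h b + int T + int j)"
    if "R \<le> L" "j < n" for R j
    using that by (intro shadow_cong_ball[OF assms(1,2)] assms(3)) auto
  ultimately show ?thesis unfolding shadow_measure_def by (intro ext) simp
qed

lemma shadow_measure_nonneg: "shadow_measure S n L T h b x \<ge> 0"
  unfolding shadow_measure_def by (intro divide_nonneg_nonneg sum_nonneg unif_weight_nonneg) simp

lemma shadow_measure_eq_0:
  assumes "horofunction S h" "\<not> word_len S (- b + x) \<le> 2 * L + T + n"
  shows "shadow_measure S n L T h b x = 0"
proof -
  have "x \<notin> shadow S h b R (h b + int T + int j)" if "R \<le> L" "j < n" for R j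
    using shadow_subset_ball[OF assms(1), of x b R] that assms(2) by force
  then show ?thesis unfolding shadow_measure_def unif_weight_def by simp
qed

end

section \<open>Shadows in hyperbolic groups\<close>

locale hyperbolic_generating_set = generating_set +
  fixes \<delta> :: real
  assumes finite_generators: "finite S"
    and four_point: "gromov_prod S x z w \<ge> min (gromov_prod S x y w) (gromov_prod S y z w) - \<delta>"
begin

definition shadow_bound :: nat where
  "shadow_bound = card {g. word_len S g \<le> nat \<lceil>4 * \<delta>\<rceil>}"

lemma shadow_diameter:
  assumes hh: "horofunction S h" and tR: "h b + 2 * int R \<le> t"
    and v: "v \<in> shadow S h b R t" and v': "v' \<in> shadow S h b R t"
  shows "real (word_len S (- v + v')) \<le> 4 * \<delta>"
proof -
  obtain u where u: "h v = t" "word_len S (- b + u) \<le> R" "int (word_len S (- u + v)) + h u = t"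
    using v unfolding shadow_def by blast
  obtain u' where u': "h v' = t" "word_len S (- b + u') \<le> R" "int (word_len S (- u' + v')) + h u' = t"
    using v' unfolding shadow_def by blast
  have "\<delta> \<ge> 0" using four_point[of v v v v] by simp
  obtain w where w: "\<And>x. x \<in> {u, u', v, v'} \<Longrightarrow> h x = int (word_len S (- w)) - int (word_len S (- w + x))"
    by (rule horofunction_agrees[OF hh, of "{u, u', v, v'}"]) auto
  define D where "D = real (word_len S (- w))"
  have dist_w: "word_dist S x w = D - h x" if "x \<in> {u, u', v, v'}" for x
    using w[OF that] word_len_commute[of x w] unfolding word_dist_def D_def by simp
  \<comment> \<open>Seen from w, the Gromov products of v, u and of u', v' equal D - t, and that of u, u' is
    at least D - t; the four-point condition, applied twice, bounds that of v, v'.\<close>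
  have "word_len S (- u + u') \<le> 2 * R"
    using word_len_triangle[of u u' b] word_len_commute[of u b] u(2) u'(2) by simp
  moreover have "h u \<le> h b + int R" "h u' \<le> h b + int R"
    using horofunction_lipschitz[OF hh, of u b] horofunction_lipschitz[OF hh, of u' b] u(2) u'(2)
    by simp_all
  ultimately have uu': "gromov_prod S u u' w \<ge> D - t"
    unfolding gromov_prod_def using dist_w[of u] dist_w[of u'] tR unfolding word_dist_def by simp
  have vu: "gromov_prod S v u w = D - t"
    unfolding gromov_prod_def using dist_w[of v] dist_w[of u] u word_len_commute[of v u]
    unfolding word_dist_def by simp
  have u'v': "gromov_prod S u' v' w = D - t"
    unfolding gromov_prod_def using dist_w[of u'] dist_w[of v'] u' unfolding word_dist_def by simp
  have "gromov_prod S v u' w \<ge> D - t - \<delta>"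
    using four_point[where x = v and y = u and z = u' and w = w] uu' vu by linarith
  then have "gromov_prod S v v' w \<ge> D - t - 2 * \<delta>"
    using four_point[where x = v and y = u' and z = v' and w = w] u'v' \<open>\<delta> \<ge> 0\<close> by linarith
  then show ?thesis
    using dist_w[of v] dist_w[of v'] u(1) u'(1) unfolding gromov_prod_def word_dist_def by simp
qed

lemma shadow_subset_ball_around_point:
  assumes "horofunction S h" "h b + 2 * int R \<le> t" "v \<in> shadow S h b R t"
  shows "shadow S h b R t \<subseteq> (+) v ` {g. word_len S g \<le> nat \<lceil>4 * \<delta>\<rceil>}"
proof
  fix v' assume "v' \<in> shadow S h b R t"
  then have "real (word_len S (- v + v')) \<le> 4 * \<delta>" by (rule shadow_diameter[OF assms])
  then have "word_len S (- v + v') \<le> nat \<lceil>4 * \<delta>\<rceil>" by (simp add: le_nat_iff le_ceiling_iff)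
  then show "v' \<in> (+) v ` {g. word_len S g \<le> nat \<lceil>4 * \<delta>\<rceil>}" by (simp add: left_transl_image_iff)
qed

lemma finite_shadow:
  assumes "horofunction S h" "h b + 2 * int R \<le> t"
  shows "finite (shadow S h b R t)"
proof (cases "shadow S h b R t = {}")
  case False
  then obtain v where "v \<in> shadow S h b R t" by blast
  from shadow_subset_ball_around_point[OF assms this] show ?thesis
    by (rule finite_subset) (simp add: finite_word_len_le[OF finite_generators])
qed simp

lemma card_shadow_le:
  assumes "horofunction S h" "h b + 2 * int R \<le> t"
  shows "card (shadow S h b R t) \<le> shadow_bound"
proof (cases "shadow S h b R t = {}")
  case False
  then obtain v where "v \<in> shadow S h b R t" by blast
  from shadow_subset_ball_around_point[OF assms this]
  have "card (shadow S h b R t) \<le> card ((+) v ` {g. word_len S g \<le> nat \<lceil>4 * \<delta>\<rceil>})"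
    by (simp add: card_mono finite_word_len_le[OF finite_generators])
  also have "\<dots> \<le> shadow_bound"
    unfolding shadow_bound_def by (rule card_image_le) (rule finite_word_len_le[OF finite_generators])
  finally show ?thesis .
qed simp

text \<open>Moving the base point by r squeezes the shadow of radius R between the shadows of
radii R - r and R + r around the old base point; so it can only change where R < r or where
the monotone, bounded sequence of cardinalities jumps within 2r steps.\<close>
lemma card_shadow_move_base_le:
  assumes hh: "horofunction S h" and r: "word_len S (- b + b') \<le> r"
    and t: "h b + 2 * int (L + 2 * r + 1) \<le> t"
  shows "card {R \<in> {1..L}. shadow S h b R t \<noteq> shadow S h b' R t} \<le> r + 2 * r * shadow_bound"
proof -
  define c where "c i = card (shadow S h b i t)" for i
  define J where "J = {i. i < L + 1 \<and> c i < c (i + 2 * r)}"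
  have level_high: "h b + 2 * int i \<le> t" if "i \<le> L + 1 + 2 * r" for i
    using that t by simp
  have mono: "c i \<le> c j" if "i \<le> j" "j \<le> L + 1 + 2 * r" for i j
    unfolding c_def using that level_high by (intro card_mono finite_shadow[OF hh] shadow_mono) auto
  have "finite J" unfolding J_def by simp
  have jumps: "card J \<le> 2 * r * shadow_bound"
    unfolding J_def using mono card_shadow_le[OF hh level_high]
    by (intro card_strict_increases_le) (auto simp: c_def)
  have cover: "{R \<in> {1..L}. shadow S h b R t \<noteq> shadow S h b' R t} \<subseteq> {..<r} \<union> (\<lambda>i. i + r) ` J"
  proof
    fix R assume R: "R \<in> {R \<in> {1..L}. shadow S h b R t \<noteq> shadow S h b' R t}"
    show "R \<in> {..<r} \<union> (\<lambda>i. i + r) ` J"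
    proof (cases "R < r")
      case False
      define i where "i = R - r"
      have R_eq: "R = i + r" "i + 2 * r = R + r" using False unfolding i_def by simp_all
      have inner: "shadow S h b i t \<subseteq> shadow S h b' R t"
        using shadow_move_base[of b' b r h i t] r word_len_commute[of b b'] unfolding R_eq(1) by simp
      have outer: "shadow S h b' R t \<subseteq> shadow S h b (i + 2 * r) t"
        using shadow_move_base[OF r, of h R t] unfolding R_eq(1) by (simp add: mult_2 add.assoc)
      have "i < L + 1" using R R_eq by auto
      have "c i < c (i + 2 * r)"
      proof (rule ccontr)
        assume "\<not> c i < c (i + 2 * r)"
        then have "c i = c (i + 2 * r)" using mono[of i "i + 2 * r"] \<open>i < L + 1\<close> by simp
        then have eq: "shadow S h b i t = shadow S h b (i + 2 * r) t"
          using card_subset_eq[OF finite_shadow[OF hh level_high[of "i + 2 * r"]], of "shadow S h b i t"]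
            inner outer \<open>i < L + 1\<close> unfolding c_def by auto
        have "shadow S h b i t \<subseteq> shadow S h b R t" "shadow S h b R t \<subseteq> shadow S h b (i + 2 * r) t"
          using R_eq by (simp_all add: shadow_mono)
        then have "shadow S h b R t = shadow S h b' R t"
          using inner outer eq by blast
        then show False using R by simp
      qed
      then show ?thesis using R_eq \<open>i < L + 1\<close> unfolding J_def by blast
    qed simp
  qed
  have "card {R \<in> {1..L}. shadow S h b R t \<noteq> shadow S h b' R t} \<le> card ({..<r} \<union> (\<lambda>i. i + r) ` J)"
    using \<open>finite J\<close> by (intro card_mono[OF _ cover]) simp
  also have "\<dots> \<le> card {..<r} + card ((\<lambda>i. i + r) ` J)"
    by (rule card_Un_le)
  also have "\<dots> \<le> r + card J"
    using card_image_le[OF \<open>finite J\<close>, of "\<lambda>i. i + r"] by simp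
  finally show ?thesis using jumps by linarith
qed

lemma sum_shadow_measure_eq_1:
  assumes hh: "horofunction S h" and "2 * L \<le> T" "n > 0" "L > 0"
  shows "(\<Sum>x\<in>{x. word_len S (- b + x) \<le> 2 * L + T + n}. shadow_measure S n L T h b x) = 1"
proof -
  let ?X = "{x. word_len S (- b + x) \<le> 2 * L + T + n}"
  have fX: "finite ?X" by (rule finite_word_ball[OF finite_generators])
  have one: "(\<Sum>x\<in>?X. unif_weight (shadow S h b R (h b + int T + int j)) x) = 1"
    if "R \<in> {1..L}" "j < n" for R j
  proof (rule sum_unif_weight_eq_1[OF fX])
    show "shadow S h b R (h b + int T + int j) \<subseteq> ?X"
      using shadow_subset_ball[OF hh] that by fastforce
    show "shadow S h b R (h b + int T + int j) \<noteq> {}"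
      by (rule shadow_nonempty[OF hh finite_generators]) simp
  qed
  have "(\<Sum>x\<in>?X. \<Sum>R\<in>{1..L}. \<Sum>j<n. unif_weight (shadow S h b R (h b + int T + int j)) x)
      = (\<Sum>R\<in>{1..L}. \<Sum>j<n. \<Sum>x\<in>?X. unif_weight (shadow S h b R (h b + int T + int j)) x)"
    by (subst sum.swap) (simp add: sum.swap[of _ "{..<n}"])
  also have "\<dots> = real (n * L)" using one by simp
  finally show ?thesis
    unfolding shadow_measure_def using assms by (simp add: sum_divide_distrib[symmetric])
qed

lemma sum_abs_diff_shadow_weights_le:
  assumes hh: "horofunction S h" and r: "word_len S (- b + b') \<le> r"
    and t: "h b + 2 * int (L + 2 * r + 1) \<le> t" and "finite X"
  shows "(\<Sum>R\<in>{1..L}. \<Sum>x\<in>X. \<bar>unif_weight (shadow S h b R t) x - unif_weight (shadow S h b' R t) x\<bar>)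
    \<le> 2 * real (r + 2 * r * shadow_bound)"
proof -
  have "(\<Sum>R\<in>{1..L}. \<Sum>x\<in>X. \<bar>unif_weight (shadow S h b R t) x - unif_weight (shadow S h b' R t) x\<bar>)
      \<le> (\<Sum>R\<in>{1..L}. if shadow S h b R t \<noteq> shadow S h b' R t then 2 else 0)"
    using sum_abs_diff_unif_weight_le_2[OF \<open>finite X\<close>] by (intro sum_mono) auto
  also have "\<dots> = 2 * real (card {R \<in> {1..L}. shadow S h b R t \<noteq> shadow S h b' R t})"
    by (simp add: sum.If_cases Int_def conj_commute)
  also have "\<dots> \<le> 2 * real (r + 2 * r * shadow_bound)"
    using card_shadow_move_base_le[OF hh r t] by (intro mult_left_mono of_nat_mono) simp_all
  finally show ?thesis .
qed

text \<open>Two sources of error: for a fixed level the shadows around b and b' differ for few radii,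
and the windows of levels above b and b' are offset by h b' - h b, which is at most r.\<close>
lemma sum_abs_diff_shadow_measure_le:
  assumes hh: "horofunction S h" and r: "word_len S (- b + b') \<le> r"
    and T: "T = 2 * (L + 2 * r + 1)" and X: "finite X" and "n > 0" "L > 0"
  shows "(\<Sum>x\<in>X. \<bar>shadow_measure S n L T h b x - shadow_measure S n L T h b' x\<bar>)
    \<le> 2 * real (r + 2 * r * shadow_bound) / real L + 2 * real r / real n"
proof -
  define P where "P R t x = unif_weight (shadow S h b R t) x" for R t x
  define Q where "Q R t x = unif_weight (shadow S h b' R t) x" for R t x
  define a where "a = h b + int T"
  define s where "s = h b' - h b"
  have "\<bar>s\<bar> \<le> int r"
    using horofunction_lipschitz[OF hh, of b' b] horofunction_lipschitz[OF hh, of b b'] r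
      word_len_commute[of b b'] unfolding s_def by linarith
  then have s_le: "real_of_int (2 * \<bar>s\<bar>) \<le> 2 * real r"
    by simp
  have "shadow_measure S n L T h b x - shadow_measure S n L T h b' x
      = ((\<Sum>j<n. \<Sum>R\<in>{1..L}. P R (a + int j) x - Q R (a + int j) x)
        + (\<Sum>R\<in>{1..L}. (\<Sum>j<n. Q R (a + int j) x) - (\<Sum>j<n. Q R (a + s + int j) x))) / real (n * L)"
    for x
    unfolding shadow_measure_def P_def Q_def a_def s_def
    by (simp add: sum_subtractf sum.swap[of _ "{..<n}"] diff_divide_distrib ac_simps)
  then have "(\<Sum>x\<in>X. \<bar>shadow_measure S n L T h b x - shadow_measure S n L T h b' x\<bar>)
      \<le> (\<Sum>x\<in>X. ((\<Sum>j<n. \<Sum>R\<in>{1..L}. \<bar>P R (a + int j) x - Q R (a + int j) x\<bar>)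
        + (\<Sum>R\<in>{1..L}. \<bar>(\<Sum>j<n. Q R (a + int j) x) - (\<Sum>j<n. Q R (a + s + int j) x)\<bar>)) / real (n * L))"
    by (intro sum_mono) (simp add: divide_right_mono abs_triangle_ineq order_trans[OF abs_triangle_ineq]
        add_mono sum_abs order_trans[OF sum_abs] sum_mono)
  also have "\<dots> = ((\<Sum>j<n. \<Sum>R\<in>{1..L}. \<Sum>x\<in>X. \<bar>P R (a + int j) x - Q R (a + int j) x\<bar>)
        + (\<Sum>R\<in>{1..L}. \<Sum>x\<in>X. \<bar>(\<Sum>j<n. Q R (a + int j) x) - (\<Sum>j<n. Q R (a + s + int j) x)\<bar>))
      / real (n * L)"
    by (simp add: sum_divide_distrib[symmetric] sum.distrib sum.swap[of _ X])
  also have "\<dots> \<le> (real n * (2 * real (r + 2 * r * shadow_bound)) + real L * (2 * real r)) / real (n * L)"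
  proof (intro divide_right_mono add_mono)
    have level: "h b + 2 * int (L + 2 * r + 1) \<le> a + int j" for j
      unfolding a_def T by simp
    have "(\<Sum>j<n. \<Sum>R\<in>{1..L}. \<Sum>x\<in>X. \<bar>P R (a + int j) x - Q R (a + int j) x\<bar>)
        \<le> (\<Sum>j<n. 2 * real (r + 2 * r * shadow_bound))"
      unfolding P_def Q_def by (intro sum_mono sum_abs_diff_shadow_weights_le[OF hh r level X])
    then show "(\<Sum>j<n. \<Sum>R\<in>{1..L}. \<Sum>x\<in>X. \<bar>P R (a + int j) x - Q R (a + int j) x\<bar>)
        \<le> real n * (2 * real (r + 2 * r * shadow_bound))"
      by simp
    have Q_le: "(\<Sum>x\<in>X. \<bar>Q R t x\<bar>) \<le> 1" for R t
      using sum_unif_weight_le_1[OF X] unfolding Q_def by (simp add: unif_weight_nonneg)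
    then have "(\<Sum>x\<in>X. \<bar>(\<Sum>j<n. Q R (a + int j) x) - (\<Sum>j<n. Q R (a + s + int j) x)\<bar>) \<le> 2 * real r"
      for R
      using sum_abs_window_shift_le[where Q = "Q R" and n = n and a = a and s = s, OF X Q_le] s_le by linarith
    then have "(\<Sum>R\<in>{1..L}. \<Sum>x\<in>X. \<bar>(\<Sum>j<n. Q R (a + int j) x) - (\<Sum>j<n. Q R (a + s + int j) x)\<bar>)
        \<le> (\<Sum>R\<in>{1..L}. 2 * real r)"
      by (intro sum_mono)
    then show "(\<Sum>R\<in>{1..L}. \<Sum>x\<in>X. \<bar>(\<Sum>j<n. Q R (a + int j) x) - (\<Sum>j<n. Q R (a + s + int j) x)\<bar>)
        \<le> real L * (2 * real r)"
      by simp
  qed simp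
  also have "\<dots> = 2 * real (r + 2 * r * shadow_bound) / real L + 2 * real r / real n"
    using assms(5,6) by (simp add: field_simps)
  finally show ?thesis .
qed

end

section \<open>The algebra and its characters\<close>

lemma star_alg_subset_cstar_alg: "f \<in> star_alg (gen_set S) \<Longrightarrow> f \<in> cstar_alg S"
  unfolding cstar_alg_def by force

lemma cstar_alg_approx:
  assumes "f \<in> cstar_alg S" "e > 0"
  obtains h where "h \<in> star_alg (gen_set S)" "\<And>x. cmod (f x - h x) \<le> e"
  using assms unfolding cstar_alg_def by blast

lemma cstar_alg_uniform_limit:
  assumes "\<And>e. e > 0 \<Longrightarrow> \<exists>f\<in>cstar_alg S. \<forall>x. cmod (F x - f x) \<le> e"
  shows "F \<in> cstar_alg S"
  unfolding cstar_alg_def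
proof (intro CollectI allI impI)
  fix e :: real assume "e > 0"
  then obtain f where f: "f \<in> cstar_alg S" "\<And>x. cmod (F x - f x) \<le> e / 2"
    using assms[of "e / 2"] by auto
  obtain h where h: "h \<in> star_alg (gen_set S)" "\<And>x. cmod (f x - h x) \<le> e / 2"
    using cstar_alg_approx[OF f(1)] \<open>e > 0\<close> half_gt_zero by blast
  have "cmod (F x - h x) \<le> e" for x
    using norm_triangle_ineq[of "F x - f x" "f x - h x"] f(2)[of x] h(2)[of x] by simp
  with h(1) show "\<exists>h\<in>star_alg (gen_set S). \<forall>x. cmod (F x - h x) \<le> e" by blast
qed

lemma cstar_alg_const: "(\<lambda>x. c) \<in> cstar_alg S"
  by (intro star_alg_subset_cstar_alg star_alg.gen) (simp add: gen_set_def)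

lemma busemann_in_cstar_alg: "busemann S z \<in> cstar_alg S"
  by (intro star_alg_subset_cstar_alg star_alg.gen) (simp add: gen_set_def)

lemma indicator_in_cstar_alg: "(indicator {k} :: 'a::group_add \<Rightarrow> complex) \<in> cstar_alg S"
proof (intro star_alg_subset_cstar_alg star_alg.gen)
  have "{x. e \<le> cmod (indicator {k} x :: complex)} \<subseteq> {k}" if "e > 0" for e
    using that by (auto simp: indicator_def)
  then have "(indicator {k} :: 'a \<Rightarrow> complex) \<in> vanish_at_infinity"
    unfolding vanish_at_infinity_def by (blast intro: finite_subset)
  then show "indicator {k} \<in> gen_set S" unfolding gen_set_def by blast
qed

lemma cstar_alg_add:
  assumes "f \<in> cstar_alg S" "g \<in> cstar_alg S"
  shows "(\<lambda>x. f x + g x) \<in> cstar_alg S"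
proof (rule cstar_alg_uniform_limit)
  fix e :: real assume "e > 0"
  obtain h1 where h1: "h1 \<in> star_alg (gen_set S)" "\<And>x. cmod (f x - h1 x) \<le> e / 2"
    using cstar_alg_approx[OF assms(1)] \<open>e > 0\<close> half_gt_zero by blast
  obtain h2 where h2: "h2 \<in> star_alg (gen_set S)" "\<And>x. cmod (g x - h2 x) \<le> e / 2"
    using cstar_alg_approx[OF assms(2)] \<open>e > 0\<close> half_gt_zero by blast
  have "cmod (f x + g x - (h1 x + h2 x)) \<le> e" for x
    using norm_triangle_ineq[of "f x - h1 x" "g x - h2 x"] h1(2)[of x] h2(2)[of x]
    by (simp add: algebra_simps)
  then show "\<exists>h\<in>cstar_alg S. \<forall>x. cmod (f x + g x - h x) \<le> e"
    using star_alg_subset_cstar_alg[OF star_alg.add[OF h1(1) h2(1)]] by fastforce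
qed

lemma cstar_alg_scal:
  assumes "f \<in> cstar_alg S"
  shows "(\<lambda>x. c * f x) \<in> cstar_alg S"
proof (rule cstar_alg_uniform_limit)
  fix e :: real assume "e > 0"
  have pos: "cmod c + 1 > 0" by (simp add: add_nonneg_pos)
  with \<open>e > 0\<close> have "e / (cmod c + 1) > 0" by simp
  then obtain h where h: "h \<in> star_alg (gen_set S)" "\<And>x. cmod (f x - h x) \<le> e / (cmod c + 1)"
    using cstar_alg_approx[OF assms] by blast
  have "cmod (c * f x - c * h x) \<le> e" for x
  proof -
    have "cmod (c * f x - c * h x) = cmod c * cmod (f x - h x)"
      by (simp add: norm_mult[symmetric] right_diff_distrib)
    also have "\<dots> \<le> (cmod c + 1) * (e / (cmod c + 1))"
      using h(2)[of x] by (intro mult_mono) auto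
    finally show ?thesis using pos by simp
  qed
  then show "\<exists>h\<in>cstar_alg S. \<forall>x. cmod (c * f x - h x) \<le> e"
    using star_alg_subset_cstar_alg[OF star_alg.scal[OF h(1)]] by fastforce
qed

lemma cstar_alg_cnj:
  assumes "f \<in> cstar_alg S"
  shows "(\<lambda>x. cnj (f x)) \<in> cstar_alg S"
proof (rule cstar_alg_uniform_limit)
  fix e :: real assume "e > 0"
  then obtain h where h: "h \<in> star_alg (gen_set S)" "\<And>x. cmod (f x - h x) \<le> e"
    using cstar_alg_approx[OF assms] by blast
  then have "cmod (cnj (f x) - cnj (h x)) \<le> e" for x
    by (metis complex_cnj_diff complex_mod_cnj)
  then show "\<exists>h\<in>cstar_alg S. \<forall>x. cmod (cnj (f x) - h x) \<le> e"
    using star_alg_subset_cstar_alg[OF star_alg.conj[OF h(1)]] by fastforce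
qed

lemma cstar_alg_sum:
  "finite I \<Longrightarrow> (\<And>i. i \<in> I \<Longrightarrow> f i \<in> cstar_alg S) \<Longrightarrow> (\<lambda>x. \<Sum>i\<in>I. f i x) \<in> cstar_alg S"
  by (induction I rule: finite_induct) (simp_all add: cstar_alg_const cstar_alg_add)

lemma bounded_range_vanish_at_infinity:
  assumes "f \<in> vanish_at_infinity"
  shows "bounded (range f)"
proof -
  have "finite {x. 1 \<le> cmod (f x)}" using assms unfolding vanish_at_infinity_def by simp
  then have "bounded (f ` {x. 1 \<le> cmod (f x)} \<union> cball 0 1)" by (simp add: finite_imp_bounded)
  moreover have "range f \<subseteq> f ` {x. 1 \<le> cmod (f x)} \<union> cball 0 1" by auto
  ultimately show ?thesis by (rule bounded_subset)
qed

lemma bounded_range_mult: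
  fixes f g :: "'a \<Rightarrow> 'b::real_normed_algebra"
  assumes "bounded (range f)" "bounded (range g)"
  shows "bounded (range (\<lambda>x. f x * g x))"
proof -
  obtain B C where "\<And>x. norm (f x) \<le> B" "\<And>x. norm (g x) \<le> C"
    using assms unfolding bounded_iff by auto
  then have "norm (f x * g x) \<le> B * C" for x
    by (meson norm_ge_zero norm_mult_ineq order_trans mult_mono)
  then show ?thesis unfolding bounded_iff by blast
qed

context generating_set
begin

lemma bounded_range_busemann: "bounded (range (busemann S z))"
proof -
  have "\<bar>real (word_len S (- x)) - real (word_len S (- x + z))\<bar> \<le> real (word_len S z)" for x
    using word_len_add_le[of "- x" z] word_len_add_le[of "- x + z" "- z"] by (simp add: add.assoc)
  then show ?thesis
    unfolding bounded_iff busemann_def word_dist_def by (auto simp del: of_real_diff)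
qed

lemma bounded_range_star_alg: "f \<in> star_alg (gen_set S) \<Longrightarrow> bounded (range f)"
proof (induction rule: star_alg.induct)
  case (gen f)
  then show ?case
    using bounded_range_vanish_at_infinity bounded_range_busemann unfolding gen_set_def by auto
next
  case (scal f c)
  then show ?case using bounded_range_mult[of "\<lambda>_. c" f] by simp
next
  case (conj f)
  then show ?case unfolding bounded_iff by simp
qed (auto intro: bounded_plus_comp bounded_range_mult)

lemma bounded_range_cstar_alg:
  assumes "f \<in> cstar_alg S"
  shows "bounded (range f)"
proof -
  obtain h where h: "h \<in> star_alg (gen_set S)" "\<And>x. cmod (f x - h x) \<le> 1"
    using cstar_alg_approx[OF assms, of 1] by auto
  obtain B where B: "\<And>x. cmod (h x) \<le> B"
    using bounded_range_star_alg[OF h(1)] unfolding bounded_iff by auto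
  have "cmod (f x) \<le> B + 1" for x
    using B[of x] h(2)[of x] norm_triangle_ineq2[of "f x" "h x"] by linarith
  then show ?thesis unfolding bounded_iff by blast
qed

lemma cstar_alg_mult:
  assumes f: "f \<in> cstar_alg S" and g: "g \<in> cstar_alg S"
  shows "(\<lambda>x. f x * g x) \<in> cstar_alg S"
proof (rule cstar_alg_uniform_limit)
  fix e :: real assume "e > 0"
  obtain B where B: "B > 0" "\<And>x. cmod (f x) \<le> B" "\<And>x. cmod (g x) \<le> B"
    using bounded_range_cstar_alg[OF f] bounded_range_cstar_alg[OF g] unfolding bounded_pos
    by (metis rangeI max.strict_coboundedI1 max.cobounded1 max.cobounded2 order_trans)
  define \<eta> where "\<eta> = min 1 (e / (2 * B + 1))"
  have "\<eta> > 0" unfolding \<eta>_def using \<open>e > 0\<close> B(1) by simp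
  obtain h1 where h1: "h1 \<in> star_alg (gen_set S)" "\<And>x. cmod (f x - h1 x) \<le> \<eta>"
    using cstar_alg_approx[OF f \<open>\<eta> > 0\<close>] by blast
  obtain h2 where h2: "h2 \<in> star_alg (gen_set S)" "\<And>x. cmod (g x - h2 x) \<le> \<eta>"
    using cstar_alg_approx[OF g \<open>\<eta> > 0\<close>] by blast
  have "cmod (f x * g x - h1 x * h2 x) \<le> e" for x
  proof -
    have "cmod (h2 x) \<le> B + 1"
      using h2(2)[of x] B(3)[of x] norm_triangle_ineq3[of "g x" "h2 x"] unfolding \<eta>_def by linarith
    have "f x * g x - h1 x * h2 x = f x * (g x - h2 x) + (f x - h1 x) * h2 x"
      by (simp add: algebra_simps)
    then have "cmod (f x * g x - h1 x * h2 x) \<le> cmod (f x) * cmod (g x - h2 x) + cmod (f x - h1 x) * cmod (h2 x)"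
      by (metis norm_mult norm_triangle_ineq)
    also have "\<dots> \<le> B * \<eta> + \<eta> * (B + 1)"
      using B h1(2) h2(2) \<open>cmod (h2 x) \<le> B + 1\<close> less_imp_le[OF \<open>\<eta> > 0\<close>]
      by (intro add_mono mult_mono) auto
    also have "\<dots> = (2 * B + 1) * \<eta>" by (simp add: algebra_simps)
    also have "\<dots> \<le> e"
    proof -
      have "\<eta> \<le> e / (2 * B + 1)" unfolding \<eta>_def by simp
      then show ?thesis using B(1) by (simp add: pos_le_divide_eq mult.commute)
    qed
    finally show ?thesis .
  qed
  then show "\<exists>h\<in>cstar_alg S. \<forall>x. cmod (f x * g x - h x) \<le> e"
    using star_alg_subset_cstar_alg[OF star_alg.mult[OF h1(1) h2(1)]] by fastforce
qed

lemma cstar_alg_power: "f \<in> cstar_alg S \<Longrightarrow> (\<lambda>x. f x ^ k) \<in> cstar_alg S"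
  by (induction k) (simp_all add: cstar_alg_const cstar_alg_mult)

end

lemma busemann_left_transl: "busemann S z (g + x) = busemann S (- g + z) x - busemann S (- g) x"
  unfolding busemann_def word_dist_def minus_add add.assoc by simp

lemma star_alg_left_transl:
  assumes "f \<in> star_alg (gen_set S)"
  shows "(\<lambda>x. f (g + x)) \<in> star_alg (gen_set S)"
  using assms
proof (induction rule: star_alg.induct)
  case (gen f)
  then consider "f \<in> vanish_at_infinity" | "f \<in> range (\<lambda>c x. c)" | z where "f = busemann S z"
    unfolding gen_set_def by blast
  then show ?case
  proof cases
    case 1
    have "{x. e \<le> cmod (f (g + x))} = (+) (- g) ` {x. e \<le> cmod (f x)}" for e
      by (auto simp: left_transl_image_iff)
    with 1 have "(\<lambda>x. f (g + x)) \<in> vanish_at_infinity"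
      unfolding vanish_at_infinity_def by simp
    then show ?thesis unfolding gen_set_def by (intro star_alg.gen) blast
  next
    case 2
    then show ?thesis using gen.hyps by (auto intro: star_alg.gen)
  next
    case 3
    have "(\<lambda>x. busemann S (- g + z) x + (- 1) * busemann S (- g) x) \<in> star_alg (gen_set S)"
      by (intro star_alg.add star_alg.scal star_alg.gen) (simp_all add: gen_set_def)
    then show ?thesis unfolding 3 busemann_left_transl by simp
  qed
next
  case (add f1 f2)
  from add.IH show ?case by (rule star_alg.add)
next
  case (mult f1 f2)
  from mult.IH show ?case by (rule star_alg.mult)
next
  case (scal f1 c)
  from scal.IH show ?case by (rule star_alg.scal)
next
  case (conj f1)
  from conj.IH show ?case by (rule star_alg.conj)
qed

lemma cstar_alg_left_transl:
  assumes "f \<in> cstar_alg S"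
  shows "(\<lambda>x. f (g + x)) \<in> cstar_alg S"
  unfolding cstar_alg_def
proof (intro CollectI allI impI)
  fix e :: real assume "e > 0"
  then obtain h where "h \<in> star_alg (gen_set S)" "\<And>x. cmod (f x - h x) \<le> e"
    using cstar_alg_approx[OF assms] by blast
  then show "\<exists>h\<in>star_alg (gen_set S). \<forall>x. cmod (f (g + x) - h x) \<le> e"
    using star_alg_left_transl[where f = h and g = g] by (intro bexI[of _ "\<lambda>x. h (g + x)"]) auto
qed

context generating_set
begin

lemma cstar_alg_inverse:
  assumes q: "(\<lambda>x. complex_of_real (q x)) \<in> cstar_alg S" and "c > 0" and c: "\<And>x. c \<le> q x"
  shows "(\<lambda>x. complex_of_real (1 / q x)) \<in> cstar_alg S"
proof -
  obtain B0 where "\<And>x. cmod (complex_of_real (q x)) \<le> B0"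
    using bounded_range_cstar_alg[OF q] unfolding bounded_iff by auto
  then have qB0: "q x \<le> B0" for x by (metis abs_le_D1 norm_of_real)
  define B where "B = B0 + 1"
  have qB: "q x < B" for x using qB0[of x] unfolding B_def by linarith
  have "c < B" using c[of undefined] qB[of undefined] by simp
  then have "B > 0" using \<open>c > 0\<close> by simp
  define \<theta> where "\<theta> = 1 - c / B"
  define \<rho> where "\<rho> x = 1 - q x / B" for x
  have \<rho>: "0 \<le> \<rho> x" "\<rho> x \<le> \<theta>" for x
    unfolding \<rho>_def \<theta>_def using qB[of x] c[of x] \<open>B > 0\<close> by (simp_all add: divide_right_mono)
  have "\<theta> < 1" unfolding \<theta>_def using \<open>c > 0\<close> \<open>B > 0\<close> by simp
  have \<rho>_cstar: "(\<lambda>x. complex_of_real (\<rho> x)) \<in> cstar_alg S"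
  proof -
    have "(\<lambda>x. 1 + complex_of_real (- 1 / B) * complex_of_real (q x)) \<in> cstar_alg S"
      by (intro cstar_alg_add cstar_alg_const cstar_alg_scal q)
    then show ?thesis unfolding \<rho>_def by (simp add: diff_divide_distrib)
  qed
  \<comment> \<open>Neumann series: 1 / q = (1 / B) * (\<Sum>j. \<rho> ^ j), with remainder \<rho> ^ K / q after K terms.\<close>
  have remainder: "1 / q x - (\<Sum>j<K. \<rho> x ^ j) / B = \<rho> x ^ K / q x" for x K
  proof -
    have "q x > 0" using c[of x] \<open>c > 0\<close> by simp
    moreover have "\<rho> x \<noteq> 1" using \<rho>(2)[of x] \<open>\<theta> < 1\<close> by simp
    moreover have "1 - \<rho> x = q x / B" unfolding \<rho>_def by simp
    ultimately show ?thesis using \<open>B > 0\<close> by (simp add: sum_gp_strict field_simps)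
  qed
  show ?thesis
  proof (rule cstar_alg_uniform_limit)
    fix e :: real assume "e > 0"
    obtain K where K: "\<theta> ^ K < c * e"
      using real_arch_pow_inv[of "c * e" \<theta>] \<open>c > 0\<close> \<open>e > 0\<close> \<open>\<theta> < 1\<close> by auto
    define s where "s x = complex_of_real (1 / B) * (\<Sum>j<K. complex_of_real (\<rho> x) ^ j)" for x
    have "s \<in> cstar_alg S"
      unfolding s_def by (intro cstar_alg_scal cstar_alg_sum cstar_alg_power \<rho>_cstar finite_lessThan)
    moreover have "cmod (complex_of_real (1 / q x) - s x) \<le> e" for x
    proof -
      have "complex_of_real (1 / q x) - s x = complex_of_real (\<rho> x ^ K / q x)"
        unfolding s_def remainder[symmetric] by simp
      then have "cmod (complex_of_real (1 / q x) - s x) = \<rho> x ^ K / q x"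
        using \<rho>(1)[of x] c[of x] \<open>c > 0\<close> by (simp add: norm_divide norm_power)
      also have "\<dots> \<le> \<theta> ^ K / c"
        using \<rho>[of x] c[of x] \<open>c > 0\<close> by (intro frac_le power_mono) simp_all
      also have "\<dots> \<le> e" using K \<open>c > 0\<close> by (simp add: divide_le_eq mult.commute)
      finally show ?thesis .
    qed
    ultimately show "\<exists>f\<in>cstar_alg S. \<forall>x. cmod (complex_of_real (1 / q x) - f x) \<le> e" by blast
  qed
qed

end

context
  fixes S :: "'a::group_add set" and y :: "('a \<Rightarrow> complex) \<Rightarrow> complex"
  assumes character: "y \<in> metric_compactification S"
begin

lemma character_add: "f \<in> cstar_alg S \<Longrightarrow> g \<in> cstar_alg S \<Longrightarrow> y (\<lambda>x. f x + g x) = y f + y g"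
  using character unfolding metric_compactification_def by blast

lemma character_mult: "f \<in> cstar_alg S \<Longrightarrow> g \<in> cstar_alg S \<Longrightarrow> y (\<lambda>x. f x * g x) = y f * y g"
  using character unfolding metric_compactification_def by blast

lemma character_scal: "f \<in> cstar_alg S \<Longrightarrow> y (\<lambda>x. c * f x) = c * y f"
  using character unfolding metric_compactification_def by blast

lemma character_outside: "f \<notin> cstar_alg S \<Longrightarrow> y f = 0"
  using character unfolding metric_compactification_def by blast

lemma character_const: "y (\<lambda>x. c) = c"
proof -
  have "y (\<lambda>x. c * 1) = c * y (\<lambda>x. 1)" by (rule character_scal[OF cstar_alg_const])
  then show ?thesis using character unfolding metric_compactification_def by simp
qed

lemma character_sum:
  "finite I \<Longrightarrow> (\<And>i. i \<in> I \<Longrightarrow> f i \<in> cstar_alg S) \<Longrightarrow> y (\<lambda>x. \<Sum>i\<in>I. f i x) = (\<Sum>i\<in>I. y (f i))"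
proof (induction I rule: finite_induct)
  case (insert i I)
  then show ?case by (simp add: character_add cstar_alg_sum)
qed (simp add: character_const)

end

context generating_set
begin

lemma character_nonzero_if_bounded_below:
  assumes "y \<in> metric_compactification S"
    and q: "(\<lambda>x. complex_of_real (q x)) \<in> cstar_alg S" and "c > 0" "\<And>x. c \<le> q x"
  shows "y (\<lambda>x. complex_of_real (q x)) \<noteq> 0"
proof
  assume "y (\<lambda>x. complex_of_real (q x)) = 0"
  have inverse: "(\<lambda>x. complex_of_real (1 / q x)) \<in> cstar_alg S"
    using cstar_alg_inverse assms by blast
  have "(\<lambda>x. complex_of_real (q x) * complex_of_real (1 / q x)) = (\<lambda>x. 1)"
  proof
    fix x
    have "q x \<noteq> 0" using assms(3) assms(4)[of x] by linarith
    then show "complex_of_real (q x) * complex_of_real (1 / q x) = 1" by (simp flip: of_real_mult)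
  qed
  then have "y (\<lambda>x. 1) = 0"
    using character_mult[OF assms(1) q inverse] \<open>y (\<lambda>x. complex_of_real (q x)) = 0\<close> by simp
  then show False using character_const[OF assms(1), of 1] by simp
qed

text \<open>Every character is a limit of point evaluations: otherwise the nonnegative function
\<Sum>i\<in>I. |f i - y (f i)|^2 would be bounded below, hence invertible, yet annihilated by y.\<close>
lemma character_approx_by_point:
  assumes y: "y \<in> metric_compactification S"
    and "finite I" and f: "\<And>i. i \<in> I \<Longrightarrow> f i \<in> cstar_alg S" and "e > 0"
  obtains x where "\<And>i. i \<in> I \<Longrightarrow> cmod (f i x - y (f i)) < e"
proof -
  define k where "k i x = f i x - y (f i)" for i x
  define q where "q x = (\<Sum>i\<in>I. (cmod (k i x))\<^sup>2)" for x
  have k: "k i \<in> cstar_alg S" "y (k i) = 0" if "i \<in> I" for i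
  proof -
    have "(\<lambda>x. f i x + - y (f i)) \<in> cstar_alg S" by (intro cstar_alg_add f that cstar_alg_const)
    moreover have "y (\<lambda>x. f i x + - y (f i)) = 0"
      using character_add[OF y f[OF that] cstar_alg_const[of "- y (f i)"]] character_const[OF y]
      by simp
    ultimately show "k i \<in> cstar_alg S" "y (k i) = 0" unfolding k_def by simp_all
  qed
  have q_eq: "(\<lambda>x. complex_of_real (q x)) = (\<lambda>x. \<Sum>i\<in>I. k i x * cnj (k i x))"
    unfolding q_def of_real_sum complex_norm_square ..
  have q_cstar: "(\<lambda>x. complex_of_real (q x)) \<in> cstar_alg S"
    unfolding q_eq using k \<open>finite I\<close> by (intro cstar_alg_sum cstar_alg_mult cstar_alg_cnj) auto
  have "y (\<lambda>x. complex_of_real (q x)) = 0"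
    unfolding q_eq using k \<open>finite I\<close>
    by (simp add: character_sum[OF y] character_mult[OF y] cstar_alg_mult cstar_alg_cnj)
  moreover have "\<exists>x. \<not> e\<^sup>2 \<le> q x"
    using character_nonzero_if_bounded_below[OF y q_cstar, of "e\<^sup>2"] \<open>e > 0\<close> calculation by auto
  then obtain x where "q x < e\<^sup>2" by (auto simp: not_le)
  have "cmod (f i x - y (f i)) < e" if "i \<in> I" for i
  proof -
    have "(cmod (k i x))\<^sup>2 \<le> q x"
      unfolding q_def using \<open>finite I\<close> that by (intro member_le_sum) auto
    then have "(cmod (k i x))\<^sup>2 < e\<^sup>2" using \<open>q x < e\<^sup>2\<close> by simp
    then show ?thesis using \<open>e > 0\<close> unfolding k_def by (simp add: power_less_imp_less_base)
  qed
  then show thesis by (rule that)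
qed

end

section \<open>Boundary points\<close>

lemma tendsto_coordinatewise_iff:
  "((f :: 'c \<Rightarrow> 'd \<Rightarrow> 'b::topological_space) \<longlongrightarrow> l) F \<longleftrightarrow> (\<forall>i. ((\<lambda>x. f x i) \<longlongrightarrow> l i) F)"
  using limitin_componentwise[of "\<lambda>i. euclidean" UNIV f l F] by (simp add: euclidean_product_topology)

lemma tendsto_coordinate: "((\<lambda>ch. ch f) \<longlongrightarrow> y f) (at y within Y)"
  using continuous_on_product_coordinates[of f]
  by (metis UNIV_I continuous_on_def subset_UNIV tendsto_within_subset)

lemma of_int_eq_if_dist_less_1:
  "dist (of_int a :: 'b::real_normed_algebra_1) (of_int b) < 1 \<Longrightarrow> a = b"
proof -
  assume "dist (of_int a :: 'b) (of_int b) < 1"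
  then have "norm (of_int (a - b) :: 'b) < 1" by (simp add: dist_norm)
  then have "\<bar>real_of_int (a - b)\<bar> < 1" by (simp only: norm_of_int)
  then show "a = b" by linarith
qed

lemma busemann_eq_of_int: "busemann S z x = of_int (int (word_len S (- x)) - int (word_len S (- x + z)))"
  by (simp add: busemann_def word_dist_def)

lemma inj_eval_char: "inj (eval_char S)"
proof
  fix a b assume "eval_char S a = eval_char S b"
  then have "eval_char S a (indicator {a}) = eval_char S b (indicator {a})" by simp
  then show "a = b"
    using indicator_in_cstar_alg[of a S] unfolding eval_char_def by (simp add: indicator_def split: if_splits)
qed

definition boundary_horofunction :: "'a::group_add set \<Rightarrow> (('a \<Rightarrow> complex) \<Rightarrow> complex) \<Rightarrow> 'a \<Rightarrow> int" where
  "boundary_horofunction S y z = \<lfloor>Re (y (busemann S z))\<rfloor>"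

context generating_set
begin

context
  fixes y :: "('a \<Rightarrow> complex) \<Rightarrow> complex"
  assumes boundary: "y \<in> metric_boundary S"
begin

lemma boundary_character: "y \<in> metric_compactification S"
  using boundary unfolding metric_boundary_def by blast

text \<open>A character that does not vanish on the indicator of k is evaluation at k.\<close>
lemma boundary_indicator_eq_0: "y (indicator {k}) = 0"
proof -
  let ?c = "y (indicator {k})"
  have "(\<lambda>x. indicator {k} x * indicator {k} x :: complex) = indicator {k}"
    by (auto simp: indicator_def)
  moreover have "y (\<lambda>x. indicator {k} x * indicator {k} x) = ?c * ?c"
    by (rule character_mult[OF boundary_character indicator_in_cstar_alg indicator_in_cstar_alg])
  ultimately have "?c * ?c = ?c" by simp
  then have "?c = 0 \<or> ?c = 1" by (metis mult_cancel_right2 mult_eq_0_iff)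
  moreover have "?c \<noteq> 1"
  proof
    assume "?c = 1"
    have "y f = eval_char S k f" for f
    proof (cases "f \<in> cstar_alg S")
      case True
      have "(\<lambda>x. f x * indicator {k} x) = (\<lambda>x. f k * indicator {k} x)" by (auto simp: indicator_def)
      then have "y f * ?c = f k * ?c"
        by (metis character_mult[OF boundary_character True indicator_in_cstar_alg]
            character_scal[OF boundary_character indicator_in_cstar_alg])
      then show ?thesis using \<open>?c = 1\<close> True unfolding eval_char_def by simp
    qed (simp add: character_outside[OF boundary_character] eval_char_def)
    then show False using boundary unfolding metric_boundary_def by auto
  qed
  ultimately show ?thesis by blast
qed

lemma boundary_busemann_eq: "y (busemann S z) = of_int (boundary_horofunction S y z)"
proof -
  have "y (busemann S z) \<in> closure \<int>"
    unfolding closure_approachable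
  proof (intro allI impI)
    fix e :: real assume "e > 0"
    then obtain x where "cmod (busemann S z x - y (busemann S z)) < e"
      using character_approx_by_point[OF boundary_character, of "{z}" "busemann S"]
      by (auto simp: busemann_in_cstar_alg)
    then show "\<exists>u\<in>\<int>. dist u (y (busemann S z)) < e"
      by (intro bexI[of _ "busemann S z x"]) (simp_all add: dist_norm busemann_eq_of_int)
  qed
  then obtain m where "y (busemann S z) = of_int m" by (auto elim: Ints_cases)
  then show ?thesis unfolding boundary_horofunction_def by simp
qed

lemma horofunction_boundary_horofunction: "horofunction S (boundary_horofunction S y)"
  unfolding horofunction_def
proof (intro allI impI)
  fix Z K :: "'a set" assume "finite Z" "finite K"
  define f where "f = case_sum (busemann S) (\<lambda>k. indicator {k})"
  obtain x where x: "\<And>i. i \<in> Inl ` Z \<union> Inr ` K \<Longrightarrow> cmod (f i x - y (f i)) < 1"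
    using character_approx_by_point[OF boundary_character, of "Inl ` Z \<union> Inr ` K" f 1]
      \<open>finite Z\<close> \<open>finite K\<close> busemann_in_cstar_alg indicator_in_cstar_alg
    unfolding f_def by (fastforce split: sum.splits)
  have "x \<notin> K"
    using x[of "Inr x"] boundary_indicator_eq_0 unfolding f_def by auto
  moreover have "boundary_horofunction S y z = int (word_len S (- x)) - int (word_len S (- x + z))"
    if "z \<in> Z" for z
  proof -
    have "cmod (f (Inl z) x - y (f (Inl z))) < 1" using x that by blast
    then have "dist (of_int (boundary_horofunction S y z) :: complex)
        (of_int (int (word_len S (- x)) - int (word_len S (- x + z)))) < 1"
      unfolding dist_norm f_def sum.case busemann_eq_of_int boundary_busemann_eq
      by (simp only: norm_minus_commute)
    then show ?thesis by (rule of_int_eq_if_dist_less_1)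
  qed
  ultimately show "\<exists>w. w \<notin> K \<and> (\<forall>z\<in>Z. boundary_horofunction S y z
      = int (word_len S (- w)) - int (word_len S (- w + z)))"
    by blast
qed

lemma boundary_islimpt_eval_char: "y islimpt range (eval_char S)"
  unfolding islimpt_def
proof (intro allI impI)
  fix U assume "y \<in> U" "open U"
  then obtain X where X: "y \<in> Pi\<^sub>E UNIV X" "\<And>f. open (X f)" "finite {f. X f \<noteq> UNIV}"
      "Pi\<^sub>E UNIV X \<subseteq> U"
    using product_topology_open_contains_basis[of "\<lambda>_. euclidean" UNIV U y]
    unfolding open_fun_def by auto
  define I where "I = {f. X f \<noteq> UNIV} \<inter> cstar_alg S"
  have "finite I" unfolding I_def using X(3) by simp
  have "\<exists>e>0. ball (y f) e \<subseteq> X f" for f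
    using X(1,2) by (simp add: PiE_iff open_contains_ball)
  then obtain e where e: "\<And>f. e f > 0" "\<And>f. ball (y f) (e f) \<subseteq> X f" by metis
  define \<epsilon> where "\<epsilon> = Min (insert 1 (e ` I))"
  have "\<epsilon> > 0" and \<epsilon>_le: "\<And>f. f \<in> I \<Longrightarrow> \<epsilon> \<le> e f"
    unfolding \<epsilon>_def using \<open>finite I\<close> e(1) by auto
  obtain x where x: "\<And>f. f \<in> I \<Longrightarrow> cmod (f x - y f) < \<epsilon>"
    using character_approx_by_point[OF boundary_character \<open>finite I\<close>, where f = id and e = \<epsilon>] \<open>\<epsilon> > 0\<close>
    unfolding I_def by auto
  have "eval_char S x f \<in> X f" for f
  proof (cases "f \<in> I")
    case True
    then have "f x \<in> ball (y f) (e f)"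
      using x[OF True] \<epsilon>_le[OF True] by (simp add: dist_norm norm_minus_commute)
    then have "f x \<in> X f" using e(2)[of f] by blast
    with True show ?thesis unfolding I_def eval_char_def by simp
  next
    case False
    then consider "X f = UNIV" | "f \<notin> cstar_alg S" unfolding I_def by blast
    then show ?thesis
    proof cases
      case 2
      then have "eval_char S x f = y f"
        using character_outside[OF boundary_character 2] unfolding eval_char_def by simp
      then show ?thesis using X(1) by (simp add: PiE_iff)
    qed simp
  qed
  then have "eval_char S x \<in> U" using X(4) by (auto simp: PiE_iff)
  moreover have "eval_char S x \<noteq> y" using boundary unfolding metric_boundary_def by auto
  ultimately show "\<exists>x'\<in>range (eval_char S). x' \<in> U \<and> x' \<noteq> y" by blast
qed

text \<open>On evaluation characters the map whose limit defines the action is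
ch \<mapsto> (f \<mapsto> ch (\<lambda>x. f (g + x))), which is continuous; so the limit at y is its value at y.\<close>
lemma bdry_action_eq: "bdry_action S g y = (\<lambda>f. if f \<in> cstar_alg S then y (\<lambda>x. f (g + x)) else 0)"
proof -
  define L where "L = (\<lambda>f. if f \<in> cstar_alg S then y (\<lambda>x. f (g + x)) else 0)"
  define F where "F = (\<lambda>ch. eval_char S (g + inv (eval_char S) ch))"
  let ?W = "at y within range (eval_char S)"
  have "?W \<noteq> bot" using boundary_islimpt_eval_char trivial_limit_within by blast
  have "((\<lambda>ch. F ch f) \<longlongrightarrow> L f) ?W" for f
  proof (cases "f \<in> cstar_alg S")
    case True
    have "F ch f = ch (\<lambda>x. f (g + x))" if ch: "ch \<in> range (eval_char S)" for ch
    proof -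
      obtain x where x: "ch = eval_char S x" using ch by blast
      then have "inv (eval_char S) ch = x" by (simp add: inv_f_f[OF inj_eval_char])
      then show ?thesis
        unfolding F_def x eval_char_def using True cstar_alg_left_transl[OF True] by simp
    qed
    then have "\<forall>\<^sub>F ch in ?W. ch (\<lambda>x. f (g + x)) = F ch f"
      by (auto simp: eventually_at_filter)
    from tendsto_coordinate this have "((\<lambda>ch. F ch f) \<longlongrightarrow> y (\<lambda>x. f (g + x))) ?W"
      by (rule Lim_transform_eventually)
    then show ?thesis unfolding L_def using True by simp
  qed (simp add: F_def L_def eval_char_def)
  then have lim: "(F \<longlongrightarrow> L) ?W" by (simp add: tendsto_coordinatewise_iff)
  have "L' = L" if "(F \<longlongrightarrow> L') ?W" for L'
  proof
    fix f
    show "L' f = L f"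
      using that lim tendsto_unique[OF \<open>?W \<noteq> bot\<close>] unfolding tendsto_coordinatewise_iff by blast
  qed
  then have "bdry_action S g y = L"
    unfolding bdry_action_def F_def[symmetric] using lim by (intro the_equality)
  then show ?thesis unfolding L_def .
qed

lemma boundary_horofunction_bdry_action:
  "boundary_horofunction S (bdry_action S g y) z
    = boundary_horofunction S y (- g + z) - boundary_horofunction S y (- g)"
proof -
  have "bdry_action S g y (busemann S z) = y (\<lambda>x. busemann S (- g + z) x + - 1 * busemann S (- g) x)"
    unfolding bdry_action_eq busemann_left_transl by (simp add: busemann_in_cstar_alg)
  also have "\<dots> = y (busemann S (- g + z)) + - 1 * y (busemann S (- g))"
    by (simp only: character_add[OF boundary_character busemann_in_cstar_alg cstar_alg_scal[OF busemann_in_cstar_alg]]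
        character_scal[OF boundary_character busemann_in_cstar_alg])
  also have "\<dots> = of_int (boundary_horofunction S y (- g + z) - boundary_horofunction S y (- g))"
    by (simp add: boundary_busemann_eq)
  finally show ?thesis unfolding boundary_horofunction_def[of S "bdry_action S g y"] by simp
qed

end

lemma eventually_boundary_horofunction_eq:
  assumes "y0 \<in> metric_boundary S" "finite Z"
  shows "\<forall>\<^sub>F y in at y0 within metric_boundary S.
    \<forall>z\<in>Z. boundary_horofunction S y z = boundary_horofunction S y0 z"
proof -
  have "\<forall>\<^sub>F y in at y0 within metric_boundary S. y \<in> metric_boundary S"
    by (simp add: eventually_at_filter)
  moreover have "\<forall>\<^sub>F y in at y0 within metric_boundary S.
      \<forall>z\<in>Z. dist (y (busemann S z)) (y0 (busemann S z)) < 1"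
    using assms(2) by (intro eventually_ball_finite ballI tendstoD[OF tendsto_coordinate]) simp_all
  ultimately show ?thesis
    by eventually_elim
      (use assms(1) in \<open>auto simp: boundary_busemann_eq intro: of_int_eq_if_dist_less_1\<close>)
qed

end

section \<open>Almost invariant measures on the boundary\<close>

text \<open>L radii and L levels; the levels start 2 (L + 2 r + 1) above the base point, high enough for
the diameter bound on shadows to survive moving the base point by r.\<close>
definition boundary_measure ::
    "'a::group_add set \<Rightarrow> nat \<Rightarrow> nat \<Rightarrow> (('a \<Rightarrow> complex) \<Rightarrow> complex) \<Rightarrow> 'a \<Rightarrow> real" where
  "boundary_measure S L r y = shadow_measure S L L (2 * (L + 2 * r + 1)) (boundary_horofunction S y) 0"

context hyperbolic_generating_set
begin

lemma boundary_measure_nonneg: "boundary_measure S L r y x \<ge> 0"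
  unfolding boundary_measure_def by (rule shadow_measure_nonneg)

lemma boundary_measure_has_sum:
  assumes "y \<in> metric_boundary S" "L > 0"
  shows "(boundary_measure S L r y has_sum 1) UNIV"
proof (rule has_sum_finite_neutralI)
  let ?T = "2 * (L + 2 * r + 1)"
  let ?X = "{x. word_len S (- 0 + x) \<le> 2 * L + ?T + L}"
  have h: "horofunction S (boundary_horofunction S y)"
    by (rule horofunction_boundary_horofunction[OF assms(1)])
  show "finite ?X" by (rule finite_word_ball[OF finite_generators])
  show "boundary_measure S L r y x = 0" if "x \<in> UNIV - ?X" for x
    using shadow_measure_eq_0[OF h] that unfolding boundary_measure_def by blast
  show "1 = (\<Sum>x\<in>?X. boundary_measure S L r y x)"
    using sum_shadow_measure_eq_1[OF h, of L ?T L 0] assms(2) unfolding boundary_measure_def by simp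
qed simp

lemma continuous_on_boundary_measure:
  "continuous_on (metric_boundary S) (\<lambda>y. boundary_measure S L r y x)"
  unfolding continuous_on_def
proof
  fix y0 assume y0: "y0 \<in> metric_boundary S"
  have "\<forall>\<^sub>F y in at y0 within metric_boundary S. y \<in> metric_boundary S"
    by (simp add: eventually_at_filter)
  then have "\<forall>\<^sub>F y in at y0 within metric_boundary S. boundary_measure S L r y x = boundary_measure S L r y0 x"
    using eventually_boundary_horofunction_eq[OF y0 finite_word_ball[OF finite_generators, of 0 "5 * L + 4 * r + 2"]]
  proof eventually_elim
    case (elim y)
    then show ?case
      unfolding boundary_measure_def
      by (subst shadow_measure_cong_ball[OF horofunction_boundary_horofunction[OF y0]
            horofunction_boundary_horofunction]) auto
  qed
  then show "((\<lambda>y. boundary_measure S L r y x) \<longlongrightarrow> boundary_measure S L r y0 x)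
      (at y0 within metric_boundary S)"
    by (rule tendsto_eventually)
qed

lemma boundary_measure_almost_invariant:
  assumes y: "y \<in> metric_boundary S" and g: "word_len S g \<le> r" and "L > 0"
  shows "infsum (\<lambda>x. \<bar>boundary_measure S L r y (- g + x) - boundary_measure S L r (bdry_action S g y) x\<bar>) UNIV
    \<le> 4 * real r * (1 + real shadow_bound) / real L"
proof -
  define h where "h = boundary_horofunction S y"
  define T where "T = 2 * (L + 2 * r + 1)"
  define \<phi> where "\<phi> x = \<bar>shadow_measure S L L T h 0 x - shadow_measure S L L T h (- g) x\<bar>" for x
  define X where "X = {x. word_len S (- 0 + x) \<le> 2 * L + T + L} \<union> {x. word_len S (- (- g) + x) \<le> 2 * L + T + L}"
  have hh: "horofunction S h" unfolding h_def by (rule horofunction_boundary_horofunction[OF y])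
  have "finite X" unfolding X_def by (intro finite_UnI finite_word_ball[OF finite_generators])
  have "boundary_horofunction S (bdry_action S g y) = (\<lambda>z. h (- g + z) - h (- g))"
    unfolding h_def by (intro ext boundary_horofunction_bdry_action[OF y])
  then have shift: "\<bar>boundary_measure S L r y (- g + x) - boundary_measure S L r (bdry_action S g y) x\<bar>
      = \<phi> (- g + x)"
    for x unfolding boundary_measure_def \<phi>_def h_def T_def by (simp add: shadow_measure_left_transl)
  then have "infsum (\<lambda>x. \<bar>boundary_measure S L r y (- g + x) - boundary_measure S L r (bdry_action S g y) x\<bar>) UNIV
      = infsum \<phi> UNIV"
  proof -
    have "bij_betw ((+) (- g)) UNIV UNIV"
      by (rule bij_betwI[where g = "(+) g"]) (simp_all add: add.assoc[symmetric])
    then show ?thesis using infsum_reindex_bij_betw[of "(+) (- g)" UNIV UNIV \<phi>] shift by simp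
  qed
  also have "\<dots> = infsum \<phi> X"
    using shadow_measure_eq_0[OF hh] by (intro infsum_cong_neutral) (auto simp: \<phi>_def X_def)
  also have "\<dots> = (\<Sum>x\<in>X. \<phi> x)"
    using \<open>finite X\<close> by simp
  also have "\<dots> \<le> 2 * real (r + 2 * r * shadow_bound) / real L + 2 * real r / real L"
    unfolding \<phi>_def
    by (rule sum_abs_diff_shadow_measure_le[OF hh _ T_def \<open>finite X\<close>]) (use g \<open>L > 0\<close> in simp_all)
  also have "\<dots> = 4 * real r * (1 + real shadow_bound) / real L"
    by (simp add: add_divide_distrib[symmetric] algebra_simps)
  finally show ?thesis .
qed

lemma exists_almost_invariant_boundary_measure:
  assumes "finite F" "\<epsilon> > 0"
  obtains L r where "L > 0"
    and "\<And>g y. g \<in> F \<Longrightarrow> y \<in> metric_boundary S \<Longrightarrow>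
      infsum (\<lambda>x. \<bar>boundary_measure S L r y (- g + x) - boundary_measure S L r (bdry_action S g y) x\<bar>) UNIV
        < \<epsilon>"
proof -
  define r where "r = Max (insert 0 (word_len S ` F))"
  have r: "word_len S g \<le> r" if "g \<in> F" for g
    unfolding r_def using \<open>finite F\<close> that by simp
  define c where "c = 4 * real r * (1 + real shadow_bound)"
  obtain L :: nat where L: "c / \<epsilon> < real L"
    using reals_Archimedean2 by blast
  moreover have "0 \<le> c / \<epsilon>" unfolding c_def using \<open>\<epsilon> > 0\<close> by simp
  ultimately have "L > 0" by (metis of_nat_0_less_iff order_le_less_trans)
  have "c / real L < \<epsilon>"
    using L \<open>\<epsilon> > 0\<close> \<open>L > 0\<close> by (simp add: divide_less_eq mult.commute)
  with \<open>L > 0\<close> show thesis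
    using that order_le_less_trans[OF boundary_measure_almost_invariant[OF _ r \<open>L > 0\<close>]]
    unfolding c_def by blast
qed

end

theorem mainTheorem6:
  fixes S :: "'a::group_add set"
  assumes "finite S"
    and "generates S"
    and "word_hyperbolic S"
  shows "amenable_action (bdry_action S) (metric_boundary S)"
proof -
  obtain \<delta> where "hyperbolic_generating_set S \<delta>"
    using assms unfolding word_hyperbolic_def hyperbolic_generating_set_def
      hyperbolic_generating_set_axioms_def generating_set_def by blast
  then interpret hyperbolic_generating_set S \<delta> .
  show ?thesis
    unfolding amenable_action_def
  proof (intro allI impI)
    fix F :: "'a set" and C :: "(('a \<Rightarrow> complex) \<Rightarrow> complex) set" and \<epsilon> :: real
    assume "finite F \<and> compact C \<and> C \<subseteq> metric_boundary S \<and> \<epsilon> > 0"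
    \<comment> \<open>the estimate below is uniform on the whole boundary\<close>
    then obtain L r where "L > 0" and almost_invariant: "\<And>g y. g \<in> F \<Longrightarrow> y \<in> metric_boundary S \<Longrightarrow>
        infsum (\<lambda>x. \<bar>boundary_measure S L r y (- g + x) - boundary_measure S L r (bdry_action S g y) x\<bar>) UNIV
          < \<epsilon>"
      using exists_almost_invariant_boundary_measure by blast
    then show "\<exists>m. (\<forall>y\<in>metric_boundary S. (\<forall>x. m y x \<ge> 0) \<and> (m y has_sum 1) UNIV) \<and>
        (\<forall>x. continuous_on (metric_boundary S) (\<lambda>y. m y x)) \<and>
        (\<forall>g\<in>F. \<forall>y\<in>C. infsum (\<lambda>x. \<bar>m y (- g + x) - m (bdry_action S g y) x\<bar>) UNIV < \<epsilon>)"
      using boundary_measure_nonneg boundary_measure_has_sum[OF _ \<open>L > 0\<close>] continuous_on_boundary_measure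
        \<open>finite F \<and> compact C \<and> C \<subseteq> metric_boundary S \<and> \<epsilon> > 0\<close>
      by (intro exI[of _ "boundary_measure S L r"]) blast
  qed
qed

end
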